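(* Let $1<\alpha<2$, $|\beta|\le1$, $\sigma>0$, and let $X$ have the geometric stable distribution with characteristic function $$E[e^{itX}]=\big[1+\sigma^\alpha|t|^\alpha\big(1-i\beta\tan\tfrac{\pi\alpha}{2}\operatorname{sign}(t)\big)\big]^{-1},\quad t\in\mathbb{R}.$$ Put $\theta=\beta\tan\frac{\pi\alpha}{2}$ and let $0<\lambda<\alpha-1$. Then for every $\mu\in\mathbb{R}$, $$E[|X-\mu|^{1+\lambda}]=\frac{\lambda}{\sin(\frac{\lambda\pi}{2})\Gamma(1-\lambda)}\Big[\mu\int_0^\infty u^{-(1+\lambda)}\frac{(1+\sigma^\alpha u^\alpha)\sin\mu u-\theta\sigma^\alpha u^\alpha\cos\mu u}{(1+\sigma^\alpha u^\alpha)^2+(\theta\sigma^\alpha u^\alpha)^2}\,du-\alpha\sigma^\alpha\int_0^\infty u^{\alpha-\lambda-2}\frac{\cos\mu u+\theta\sin\mu u}{(1+\sigma^\alpha u^\alpha)^2+(\theta\sigma^\alpha u^\alpha)^2}\,du$$ $$+2\alpha\sigma^\alpha\int_0^\infty u^{\alpha-\lambda-2}\frac{\{(1+\sigma^\alpha u^\alpha)\cos\mu u+\theta\sigma^\alpha u^\alpha\sin\mu u\}\{1+\sigma^\alpha u^\alpha+\theta^2\sigma^\alpha u^\alpha\}}{\{(1+\sigma^\alpha u^\alpha)^2+(\theta\sigma^\alpha u^\alpha)^2\}^2}\,du\Big]$$ and $$E[|X|^{1+\lambda}]=\frac{\lambda\sigma^{1+\lambda}}{\sin(\frac{\lambda\pi}{2})\Gamma(1-\lambda)}\int_0^\infty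 v^{-\frac{1+\lambda}{\alpha}}\frac{(1+v)^2+(\theta v)^2+2\theta^2v}{\{(1+v)^2+(\theta v)^2\}^2}\,dv.$$
   Context: $\Gamma$ denotes the Gamma function. *)

theory Defs
  imports "HOL-Probability.Probability"
begin

end

theory Submission
  imports Defs
begin

text \<open>
  For \<open>0 < p < 2\<close> and real \<open>y\<close> one has
  \<open>\<bar>y\<bar> powr p = K\<^sub>p\<^sup>-\<^sup>1 * (\<integral>\<^sub>0\<^sup>\<infinity> (1 - cos (t y)) t powr (- p - 1) dt)\<close> with
  \<open>K\<^sub>p = pi / (2 sin (pi p / 2) Gamma (p + 1))\<close>. The constant is found by multiplying with
  \<open>Gamma (p + 1) = \<integral>\<^sub>0\<^sup>\<infinity> x powr p exp (- x) dx\<close> and integrating in \<open>x\<close> first, which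
  leaves the Beta integral \<open>\<integral>\<^sub>0\<^sup>\<infinity> t powr (1 - p) / (1 + t\<^sup>2) dt\<close>. By Tonelli,
  \<open>E\<bar>X - \<mu>\<bar> powr p = K\<^sub>p\<^sup>-\<^sup>1 * (\<integral>\<^sub>0\<^sup>\<infinity> (1 - Re (exp (- i \<mu> t) \<phi> t)) t powr (- p - 1) dt)\<close>
  for the characteristic function \<open>\<phi>\<close> of \<open>X\<close>. With \<open>p = 1 + \<lambda>\<close>, an integration by
  parts against \<open>t powr (- p)\<close> replaces the integrand by the derivative of
  \<open>Re (exp (- i \<mu> t) \<phi> t)\<close>, which is the combination of the three integrands of the first
  formula; the boundary terms vanish because \<open>1 - Re (exp (- i \<mu> t) \<phi> t)\<close> is bounded and
  \<open>O(t powr \<alpha> + t\<^sup>2)\<close> at \<open>0\<close>. For \<open>\<mu> = 0\<close> the substitution \<open>v = \<sigma> powr \<alpha> * t powr \<alpha>\<close>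
  gives the second formula.
\<close>

section \<open>Integrability on the positive half-line\<close>

lemma set_integrable_powr_0_1:
  assumes "-1 < (a::real)"
  shows "set_integrable lborel {0<..1} (\<lambda>t. t powr a)"
proof -
  have "(\<lambda>t. t powr a) integrable_on {0<..1}"
    by (rule integrable_on_powr_from_0') (use assms in auto)
  hence "(\<lambda>t. t powr a) absolutely_integrable_on {0<..1}"
    by (subst absolutely_integrable_on_iff_nonneg) auto
  thus ?thesis unfolding set_integrable_def
    by (subst (asm) integrable_completion) auto
qed

lemma set_integrable_powr_1_infty:
  assumes "(b::real) < -1"
  shows "set_integrable lborel {1..} (\<lambda>t. t powr b)"
proof -
  have "(\<lambda>t. t powr b) integrable_on {1..}"
    using has_integral_powr_to_inf[OF assms, of 1] by (auto simp: integrable_on_def)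
  hence "(\<lambda>t. t powr b) absolutely_integrable_on {1..}"
    by (subst absolutely_integrable_on_iff_nonneg) auto
  thus ?thesis unfolding set_integrable_def
    by (subst (asm) integrable_completion) auto
qed

definition powr_split :: "real \<Rightarrow> real \<Rightarrow> real \<Rightarrow> real" where
  "powr_split a b t = (if t \<le> 1 then t powr a else t powr b)"

lemma powr_split_nonneg: "0 \<le> powr_split a b t"
  by (simp add: powr_split_def)

lemma powr_le_powr_split_0_1: "0 < t \<Longrightarrow> t \<le> 1 \<Longrightarrow> a \<le> e \<Longrightarrow> t powr e \<le> powr_split a b t"
  unfolding powr_split_def by (auto intro: powr_mono')

lemma powr_le_powr_split_1_infty: "1 \<le> t \<Longrightarrow> e \<le> b \<Longrightarrow> t powr e \<le> powr_split a b t"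
  unfolding powr_split_def by (cases "t = 1") (auto intro: powr_mono)

lemma set_integrable_powr_split:
  assumes "-1 < a" "b < -1"
  shows "set_integrable lborel {0<..} (powr_split a b)"
proof -
  have "set_integrable lborel {0<..1} (powr_split a b)"
    using set_integrable_powr_0_1[OF assms(1)]
    by (subst set_integrable_cong) (auto simp: powr_split_def)
  moreover have "set_integrable lborel {1<..} (powr_split a b)"
  proof -
    have "set_integrable lborel {1<..} (\<lambda>t. t powr b)"
      by (rule set_integrable_subset[OF set_integrable_powr_1_infty[OF assms(2)]]) auto
    thus ?thesis by (subst set_integrable_cong) (auto simp: powr_split_def)
  qed
  ultimately have "set_integrable lborel ({0<..1} \<union> {1<..}) (powr_split a b)"
    by (intro set_integrable_Un) auto
  also have "{0<..1} \<union> {1<..} = {0::real<..}" by auto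
  finally show ?thesis .
qed

lemma set_borel_measurable_lborel_continuous_on:
  fixes f :: "real \<Rightarrow> real"
  assumes "S \<in> sets borel" "continuous_on S f"
  shows "set_borel_measurable lborel S f"
  using set_measurable_continuous_on[OF assms]
  by (simp add: set_borel_measurable_def measurable_cong_sets[OF sets_lborel refl])

lemma set_integrable_powr_split_bound:
  fixes f :: "real \<Rightarrow> real"
  assumes "-1 < a" "b < -1"
    and cont: "continuous_on {0<..} f"
    and bound: "\<And>t. 0 < t \<Longrightarrow> \<bar>f t\<bar> \<le> c * powr_split a b t"
  shows "set_integrable lborel {0<..} f"
proof -
  have "set_integrable lborel {0<..} (\<lambda>t. c * powr_split a b t)"
    using set_integrable_powr_split[OF assms(1,2)] by (rule set_integrable_mult_right)
  moreover have "set_borel_measurable lborel {0<..} f"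
    by (rule set_borel_measurable_lborel_continuous_on[OF _ cont]) simp
  ultimately show ?thesis
    unfolding set_integrable_def set_borel_measurable_def
    by (rule Bochner_Integration.integrable_bound)
       (auto intro!: AE_I2 simp: indicator_def intro: order_trans[OF bound])
qed

lemma set_integrable_lborel_if_absolutely_integrable:
  fixes f :: "real \<Rightarrow> real"
  assumes "f absolutely_integrable_on {0<..}" "continuous_on {0<..} f"
  shows "set_integrable lborel {0<..} f"
proof -
  have "set_borel_measurable lborel {0<..} f"
    by (rule set_borel_measurable_lborel_continuous_on[OF _ assms(2)]) simp
  thus ?thesis using assms(1) unfolding set_integrable_def set_borel_measurable_def
    by (simp add: integrable_completion)
qed

lemma absolutely_integrable_powr_substitution:
  fixes f :: "real \<Rightarrow> real"
  assumes "0 < c" "0 < a"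
  shows "(\<lambda>t. c * a * t powr (a - 1) * f (c * t powr a)) absolutely_integrable_on {0<..} \<and>
           integral {0<..} (\<lambda>t. c * a * t powr (a - 1) * f (c * t powr a)) = r
     \<longleftrightarrow> f absolutely_integrable_on {0<..} \<and> integral {0<..} f = r"
proof -
  define g where "g t = c * t powr a" for t
  have "g ` {0<..} = {0<..}"
  proof (intro equalityI subsetI)
    fix v :: real assume "v \<in> {0<..}"
    hence "g ((v / c) powr (1 / a)) = v" "(v / c) powr (1 / a) \<in> {0<..}"
      unfolding g_def using assms by (auto simp: powr_powr)
    thus "v \<in> g ` {0<..}" by (metis image_eqI)
  qed (use assms in \<open>auto simp: g_def\<close>)
  moreover have "inj_on g {0<..}"
  proof (rule inj_onI)
    fix x y :: real assume "x \<in> {0<..}" "y \<in> {0<..}" "g x = g y"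
    hence "(x powr a) powr (1 / a) = (y powr a) powr (1 / a)" using assms by (simp add: g_def)
    thus "x = y" using \<open>x \<in> {0<..}\<close> \<open>y \<in> {0<..}\<close> assms by (simp add: powr_powr)
  qed
  moreover have "(g has_real_derivative c * (a * x powr (a - 1))) (at x within {0<..})"
    if "x \<in> {0<..}" for x
    using that unfolding g_def by (auto intro!: derivative_eq_intros)
  ultimately show ?thesis
    using has_absolute_integral_change_of_variables_1'[of "{0<..}" g "\<lambda>x. c * (a * x powr (a - 1))" f r]
      assms by (simp add: g_def abs_mult mult.assoc)
qed

section \<open>Some classical integrals\<close>

lemma nn_integral_powr_exp_Gamma:
  assumes "a > 0"
  shows "(\<integral>\<^sup>+x. ennreal (indicator {0<..} x * x powr (a - 1) * exp (- x)) \<partial>lborel) = ennreal (Gamma a)"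
proof -
  have "(\<integral>\<^sup>+x. ennreal (indicator {0<..} x * x powr (a - 1) * exp (- x)) \<partial>lborel)
      = (\<integral>\<^sup>+x. ennreal (indicator {0..} x * x powr (a - 1) / exp x) \<partial>lborel)"
    by (intro nn_integral_cong) (auto simp: indicator_def exp_minus field_simps)
  also have "\<dots> = ennreal (Gamma a)" using Gamma_conv_nn_integral_real[OF assms] by simp
  finally show ?thesis .
qed

lemma nn_integral_powr_exp_scaled_Gamma:
  assumes "a > 0" "c > 0"
  shows "(\<integral>\<^sup>+y. ennreal (indicator {0<..} y * y powr (a - 1) * exp (- (c * y))) \<partial>lborel)
       = ennreal (c powr (-a) * Gamma a)"
proof -
  let ?f = "\<lambda>y. ennreal (indicator {0<..} y * y powr (a - 1) * exp (- (c * y)))"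
  have "(\<integral>\<^sup>+y. ?f y \<partial>lborel) = ennreal \<bar>1/c\<bar> * (\<integral>\<^sup>+x. ?f (0 + (1/c) * x) \<partial>lborel)"
    using assms by (intro nn_integral_real_affine) auto
  also have "(\<integral>\<^sup>+x. ?f (0 + (1/c) * x) \<partial>lborel)
       = (\<integral>\<^sup>+x. ennreal (c powr (1 - a)) * ennreal (indicator {0<..} x * x powr (a - 1) * exp (- x)) \<partial>lborel)"
    using assms
    by (intro nn_integral_cong)
       (auto simp: indicator_def ennreal_mult'[symmetric] powr_divide powr_diff zero_less_mult_iff field_simps)
  also have "\<dots> = ennreal (c powr (1 - a)) * ennreal (Gamma a)"
    by (subst nn_integral_cmult) (auto simp: nn_integral_powr_exp_Gamma[OF assms(1)])
  also have "ennreal \<bar>1/c\<bar> * (ennreal (c powr (1 - a)) * ennreal (Gamma a)) = ennreal (c powr (-a) * Gamma a)"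
    using assms by (simp add: ennreal_mult'[symmetric] powr_diff powr_minus field_simps)
  finally show ?thesis .
qed

lemma nn_integral_exp_scaled:
  assumes "c > 0"
  shows "(\<integral>\<^sup>+s. ennreal (indicator {0<..} s * exp (- (c * s))) \<partial>lborel) = ennreal (1 / c)"
proof -
  have "(\<integral>\<^sup>+s. ennreal (indicator {0<..} s * exp (- (c * s))) \<partial>lborel)
     = (\<integral>\<^sup>+s. ennreal (indicator {0<..} s * s powr (1 - 1) * exp (- (c * s))) \<partial>lborel)"
    by (intro nn_integral_cong) (auto simp: indicator_def)
  thus ?thesis using nn_integral_powr_exp_scaled_Gamma[of 1 c] assms by (simp add: powr_minus divide_inverse)
qed

text \<open>Euler's integral for \<open>B(a, 1 - a)\<close>, using \<open>1 / (1 + y) = \<integral>\<^sub>0\<^sup>\<infinity> exp (-(1 + y) s) ds\<close> and Tonelli.\<close>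

lemma nn_integral_powr_div_1_plus:
  assumes "0 < a" "a < 1"
  shows "(\<integral>\<^sup>+y. ennreal (indicator {0<..} y * y powr (a - 1) / (1 + y)) \<partial>lborel)
       = ennreal (Gamma a * Gamma (1 - a))"
proof -
  let ?h = "\<lambda>y s. ennreal (indicator {0<..} y * indicator {0<..} s * y powr (a - 1) * exp (- ((1 + y) * s)))"
  have inner_s: "(\<integral>\<^sup>+s. ?h y s \<partial>lborel) = ennreal (indicator {0<..} y * y powr (a - 1) / (1 + y))" for y
  proof (cases "y > 0")
    case True
    have "(\<integral>\<^sup>+s. ?h y s \<partial>lborel)
        = (\<integral>\<^sup>+s. ennreal (y powr (a - 1)) * ennreal (indicator {0<..} s * exp (- ((1 + y) * s))) \<partial>lborel)"
      using True by (intro nn_integral_cong) (auto simp: indicator_def ennreal_mult'[symmetric])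
    also have "\<dots> = ennreal (y powr (a - 1)) * ennreal (1 / (1 + y))"
      using True by (subst nn_integral_cmult) (auto simp: nn_integral_exp_scaled)
    finally show ?thesis using True by (simp add: ennreal_mult'[symmetric] divide_inverse)
  qed (simp add: indicator_def)
  have inner_y: "(\<integral>\<^sup>+y. ?h y s \<partial>lborel)
      = ennreal (indicator {0<..} s * s powr ((1 - a) - 1) * exp (- s)) * ennreal (Gamma a)" for s
  proof (cases "s > 0")
    case True
    have "(\<integral>\<^sup>+y. ?h y s \<partial>lborel)
        = (\<integral>\<^sup>+y. ennreal (exp (- s)) * ennreal (indicator {0<..} y * y powr (a - 1) * exp (- (s * y))) \<partial>lborel)"
      using True
      by (intro nn_integral_cong)
         (auto simp: indicator_def ennreal_mult'[symmetric] algebra_simps exp_diff exp_minus divide_inverse)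
    also have "\<dots> = ennreal (exp (- s)) * ennreal (s powr (-a) * Gamma a)"
      using True assms by (subst nn_integral_cmult) (auto simp: nn_integral_powr_exp_scaled_Gamma)
    finally show ?thesis using True assms by (simp add: ennreal_mult'[symmetric] mult_ac)
  qed (simp add: indicator_def)
  have "(\<integral>\<^sup>+y. ennreal (indicator {0<..} y * y powr (a - 1) / (1 + y)) \<partial>lborel)
      = (\<integral>\<^sup>+y. \<integral>\<^sup>+s. ?h y s \<partial>lborel \<partial>lborel)"
    by (simp add: inner_s)
  also have "\<dots> = (\<integral>\<^sup>+s. \<integral>\<^sup>+y. ?h y s \<partial>lborel \<partial>lborel)"
    by (rule lborel_pair.Fubini'[symmetric]) simp
  also have "\<dots> = ennreal (Gamma (1 - a)) * ennreal (Gamma a)"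
    using assms nn_integral_powr_exp_Gamma[of "1 - a"] by (simp add: inner_y nn_integral_multc)
  finally show ?thesis
    using assms by (simp add: ennreal_mult'[symmetric] mult_ac)
qed

lemma has_integral_if_nn_integral:
  fixes f :: "real \<Rightarrow> real"
  assumes "f \<in> borel_measurable borel" "S \<in> sets borel"
    and "\<And>x. x \<in> S \<Longrightarrow> 0 \<le> f x"
    and "(\<integral>\<^sup>+x. ennreal (indicator S x * f x) \<partial>lborel) = ennreal r" "0 \<le> r"
  shows "(f has_integral r) S"
proof -
  have "((\<lambda>x. indicator S x * f x) has_integral r) UNIV"
    by (rule nn_integral_has_integral) (use assms in \<open>auto simp: indicator_def\<close>)
  hence "((\<lambda>x. if x \<in> S then f x else 0) has_integral r) UNIV"
    by (rule has_integral_eq[rotated]) (auto simp: indicator_def)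
  thus ?thesis by (simp add: has_integral_restrict_UNIV)
qed

lemma nn_integral_powr_div_1_plus_square:
  assumes "0 < p" "p < 2"
  shows "(\<integral>\<^sup>+t. ennreal (indicator {0<..} t * (t powr (1 - p) / (1 + t\<^sup>2))) \<partial>lborel)
       = ennreal (Gamma (p/2) * Gamma (1 - p/2) / 2)"
proof -
  define f where "f = (\<lambda>y::real. y powr (- p / 2) / (1 + y) / 2)"
  define b where "b = Gamma (p/2) * Gamma (1 - p/2) / 2"
  have "0 \<le> b" unfolding b_def using assms by simp
  have "(\<integral>\<^sup>+y. ennreal (indicator {0<..} y * f y) \<partial>lborel)
      = (\<integral>\<^sup>+y. ennreal (1/2) * ennreal (indicator {0<..} y * y powr ((1 - p/2) - 1) / (1 + y)) \<partial>lborel)"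
    by (intro nn_integral_cong, subst ennreal_mult'[symmetric], simp, rule arg_cong[where f=ennreal])
       (auto simp: f_def indicator_def field_simps)
  also have "\<dots> = ennreal (1/2) * ennreal (Gamma (1 - p/2) * Gamma (1 - (1 - p/2)))"
    using assms nn_integral_powr_div_1_plus[of "1 - p/2"] by (subst nn_integral_cmult) auto
  also have "\<dots> = ennreal b"
    using assms by (subst ennreal_mult[symmetric]) (auto simp: b_def mult_ac)
  finally have "(f has_integral b) {0<..}"
    using \<open>0 \<le> b\<close> by (intro has_integral_if_nn_integral) (auto simp: f_def)
  hence "f absolutely_integrable_on {0<..} \<and> integral {0<..} f = b"
    by (subst absolutely_integrable_on_iff_nonneg)
       (auto simp: f_def integral_unique intro: has_integral_integrable)
  hence "(\<lambda>t. 1 * 2 * t powr (2 - 1) * f (1 * t powr 2)) absolutely_integrable_on {0<..}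
      \<and> integral {0<..} (\<lambda>t. 1 * 2 * t powr (2 - 1) * f (1 * t powr 2)) = b"
    by (subst absolutely_integrable_powr_substitution) auto
  moreover have "1 * 2 * t powr (2 - 1) * f (1 * t powr 2) = t powr (1 - p) / (1 + t\<^sup>2)"
    if "t \<in> {0<..}" for t
  proof -
    have "t powr 2 = t\<^sup>2"
      using that by (simp add: powr_numeral)
    moreover have "(t powr 2) powr (- p / 2) = t powr (- p)"
      by (simp add: powr_powr)
    moreover have "0 < t powr p * (1 + t\<^sup>2)"
      using that by (simp add: add_pos_nonneg)
    ultimately show ?thesis
      using that by (simp add: f_def powr_diff powr_minus field_simps)
  qed
  ultimately have "((\<lambda>t. t powr (1 - p) / (1 + t\<^sup>2)) has_integral b) {0<..}"
    by (metis (no_types, lifting) absolutely_integrable_on_def has_integral_cong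
        has_integral_integrable_integral)
  from nn_integral_has_integral_lebesgue[OF _ this] show ?thesis unfolding b_def by simp
qed

lemma one_minus_cos_exp_antiderivative:
  fixes t :: real
  defines "F \<equiv> \<lambda>x. - exp (- x) * (1 + (t * sin (t * x) - cos (t * x)) / (1 + t\<^sup>2))"
  shows "DERIV F x :> (1 - cos (t * x)) * exp (- x)" and "(F \<longlongrightarrow> 0) at_top"
proof -
  have pos: "0 < 1 + t\<^sup>2" by (simp add: add_pos_nonneg)
  define c where "c = 1 / (1 + t\<^sup>2)"
  have c: "0 < c" "c \<le> 1" "c * (1 + t\<^sup>2) = 1"
    unfolding c_def using pos by simp_all
  have F_c: "F = (\<lambda>x. - exp (- x) * (1 + c * (t * sin (t * x) - cos (t * x))))"
    unfolding F_def c_def using pos by simp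
  have "DERIV F x :> exp (- x) * (1 + c * (t * sin (t * x) - cos (t * x)))
                     - exp (- x) * (c * (t * (cos (t * x) * t) + sin (t * x) * t))"
    unfolding F_c by (auto intro!: derivative_eq_intros)
  moreover have "exp (- x) * (1 + c * (t * sin (t * x) - cos (t * x)))
                 - exp (- x) * (c * (t * (cos (t * x) * t) + sin (t * x) * t))
               = exp (- x) * (1 - c * (1 + t\<^sup>2) * cos (t * x))"
    by (simp add: algebra_simps power2_eq_square)
  ultimately show "DERIV F x :> (1 - cos (t * x)) * exp (- x)"
    using c(3) by (simp add: mult.commute)
  have bound: "\<bar>c * (t * sin (t * x) - cos (t * x))\<bar> \<le> \<bar>t\<bar> + 1" for x
  proof -
    have "\<bar>t * sin (t * x)\<bar> \<le> \<bar>t\<bar>"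
      by (simp add: abs_mult mult_left_le abs_sin_le_one)
    hence "\<bar>t * sin (t * x) - cos (t * x)\<bar> \<le> \<bar>t\<bar> + 1"
      using abs_triangle_ineq4[of "t * sin (t * x)" "cos (t * x)"] abs_cos_le_one[of "t * x"]
      by linarith
    thus ?thesis
      using c(1,2) by (simp add: abs_mult order_trans[OF mult_left_le_one_le])
  qed
  have "\<bar>F x\<bar> \<le> exp (- x) * (\<bar>t\<bar> + 2)" for x
  proof -
    have "\<bar>F x\<bar> = exp (- x) * \<bar>1 + c * (t * sin (t * x) - cos (t * x))\<bar>"
      by (simp add: F_c abs_mult)
    also have "\<dots> \<le> exp (- x) * (\<bar>t\<bar> + 2)"
      using abs_triangle_ineq[of 1 "c * (t * sin (t * x) - cos (t * x))"] bound[of x]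
      by (intro mult_left_mono) (linarith, simp)
    finally show ?thesis .
  qed
  hence "\<forall>\<^sub>F x in at_top. norm (F x) \<le> exp (- x) * (\<bar>t\<bar> + 2)"
    by (intro always_eventually allI) simp
  moreover have "((\<lambda>x. exp (- x) * (\<bar>t\<bar> + 2)) \<longlongrightarrow> 0) at_top"
    by (intro tendsto_mult_left_zero filterlim_compose[OF exp_at_bot] filterlim_uminus_at_bot_at_top)
  ultimately show "(F \<longlongrightarrow> 0) at_top"
    by (rule Lim_null_comparison)
qed

lemma nn_integral_one_minus_cos_exp:
  fixes t :: real
  shows "(\<integral>\<^sup>+x. ennreal (indicator {0<..} x * ((1 - cos (t * x)) * exp (- x))) \<partial>lborel)
       = ennreal (t\<^sup>2 / (1 + t\<^sup>2))"
proof -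
  define f where "f x = (1 - cos (t * x)) * exp (- x)" for x
  define F where "F x = - exp (- x) * (1 + (t * sin (t * x) - cos (t * x)) / (1 + t\<^sup>2))" for x
  note F_props = one_minus_cos_exp_antiderivative[of t, folded F_def[abs_def] f_def]
  have pos: "0 < 1 + t\<^sup>2" by (simp add: add_pos_nonneg)
  have "(F \<longlongrightarrow> F 0) (at_right 0)" unfolding F_def
    using pos by (intro tendsto_intros continuous_intros) simp
  moreover have "F 0 = - (t\<^sup>2 / (1 + t\<^sup>2))" unfolding F_def using pos by (simp add: field_simps)
  ultimately have F_0: "((F \<circ> real_of_ereal) \<longlongrightarrow> - (t\<^sup>2 / (1 + t\<^sup>2))) (at_right 0)"
    by (simp add: zero_ereal_def ereal_tendsto_simps)
  have F_infty: "((F \<circ> real_of_ereal) \<longlongrightarrow> 0) (at_left \<infinity>)"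
    using F_props(2) by (simp add: ereal_tendsto_simps)
  have f_nonneg: "0 \<le> f x" for x unfolding f_def by (intro mult_nonneg_nonneg) auto
  have f_cont: "isCont f x" for x
    unfolding f_def[abs_def] by (intro continuous_intros)
  have "AE x in lborel. 0 < ereal x \<longrightarrow> ereal x < \<infinity> \<longrightarrow> 0 \<le> f x"
    using f_nonneg by simp
  note FTC = interval_integral_FTC_nonneg[OF _ F_props(1) f_cont this F_0 F_infty]
  have "set_integrable lborel (einterval 0 \<infinity>) f" "(LBINT x=0..\<infinity>. f x) = 0 - - (t\<^sup>2 / (1 + t\<^sup>2))"
    by (rule FTC(1), simp) (rule FTC(2), simp)
  moreover have "einterval 0 \<infinity> = {0::real<..}" by (auto simp: einterval_iff)
  ultimately have "set_integrable lborel {0<..} f" "(LBINT x:{0<..}. f x) = t\<^sup>2 / (1 + t\<^sup>2)"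
    by (simp_all add: interval_lebesgue_integral_0_infty)
  hence int: "integrable lborel (\<lambda>x. indicator {0<..} x * f x)"
    and val: "(\<integral>x. indicator {0<..} x * f x \<partial>lborel) = t\<^sup>2 / (1 + t\<^sup>2)"
    by (simp_all add: set_integrable_def set_lebesgue_integral_def)
  have "AE x in lborel. 0 \<le> indicator {0<..} x * f x"
    using f_nonneg by (simp add: indicator_def)
  from nn_integral_eq_integral[OF int this]
  have "(\<integral>\<^sup>+x. ennreal (indicator {0<..} x * f x) \<partial>lborel) = ennreal (t\<^sup>2 / (1 + t\<^sup>2))"
    by (simp only: val)
  thus ?thesis by (simp add: f_def)
qed

section \<open>Fractional absolute moments through the characteristic function\<close>

definition cos_kernel_const :: "real \<Rightarrow> ennreal" where
  "cos_kernel_const p = (\<integral>\<^sup>+t. ennreal (indicator {0<..} t * ((1 - cos t) * t powr (- p - 1))) \<partial>lborel)"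

lemma nn_integral_one_minus_cos_powr:
  fixes y p :: real
  shows "(\<integral>\<^sup>+t. ennreal (indicator {0<..} t * ((1 - cos (t * y)) * t powr (- p - 1))) \<partial>lborel)
       = ennreal (\<bar>y\<bar> powr p) * cos_kernel_const p"
proof (cases "y = 0")
  case False
  define c where "c = 1 / \<bar>y\<bar>"
  have c: "c > 0" using False by (simp add: c_def)
  let ?f = "\<lambda>t. ennreal (indicator {0<..} t * ((1 - cos (t * y)) * t powr (- p - 1)))"
  have cos_c: "cos (x * c * y) = cos x" for x
    using False by (cases "y > 0") (simp_all add: c_def)
  have "(\<integral>\<^sup>+t. ?f t \<partial>lborel) = ennreal \<bar>c\<bar> * (\<integral>\<^sup>+x. ?f (0 + c * x) \<partial>lborel)"
    using c by (intro nn_integral_real_affine) auto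
  also have "(\<integral>\<^sup>+x. ?f (0 + c * x) \<partial>lborel)
       = (\<integral>\<^sup>+x. ennreal (c powr (- p - 1))
                * ennreal (indicator {0<..} x * ((1 - cos x) * x powr (- p - 1))) \<partial>lborel)"
  proof (intro nn_integral_cong)
    fix x :: real
    show "?f (0 + c * x) = ennreal (c powr (- p - 1))
                * ennreal (indicator {0<..} x * ((1 - cos x) * x powr (- p - 1)))"
      using c cos_c[of x]
      by (cases "x > 0")
         (auto simp: indicator_def powr_mult zero_less_mult_iff ennreal_mult'[symmetric] mult_ac)
  qed
  also have "\<dots> = ennreal (c powr (- p - 1)) * cos_kernel_const p"
    unfolding cos_kernel_const_def by (subst nn_integral_cmult) auto
  also have "\<bar>c\<bar> * c powr (- p - 1) = \<bar>y\<bar> powr p"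
    using c False by (simp add: c_def powr_diff powr_minus powr_divide field_simps)
  hence "ennreal \<bar>c\<bar> * (ennreal (c powr (- p - 1)) * cos_kernel_const p) = ennreal (\<bar>y\<bar> powr p) * cos_kernel_const p"
    using c by (simp add: ennreal_mult'[symmetric] mult.assoc[symmetric])
  finally show ?thesis .
qed simp

lemma cos_kernel_const_mult_Gamma:
  assumes "0 < p" "p < 2"
  shows "cos_kernel_const p * ennreal (Gamma (p + 1)) = ennreal (Gamma (p/2) * Gamma (1 - p/2) / 2)"
proof -
  let ?g = "\<lambda>x t. ennreal (indicator {0<..} x * indicator {0<..} t
                            * ((1 - cos (t * x)) * t powr (- p - 1) * exp (- x)))"
  have inner_t: "(\<integral>\<^sup>+t. ?g x t \<partial>lborel)
      = ennreal (indicator {0<..} x * x powr ((p + 1) - 1) * exp (- x)) * cos_kernel_const p" for x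
  proof -
    have "(\<integral>\<^sup>+t. ?g x t \<partial>lborel)
        = (\<integral>\<^sup>+t. ennreal (indicator {0<..} x * exp (- x))
                 * ennreal (indicator {0<..} t * ((1 - cos (t * x)) * t powr (- p - 1))) \<partial>lborel)"
      by (intro nn_integral_cong) (auto simp: indicator_def ennreal_mult'[symmetric] mult_ac)
    also have "\<dots> = ennreal (indicator {0<..} x * exp (- x)) * (ennreal (\<bar>x\<bar> powr p) * cos_kernel_const p)"
      by (subst nn_integral_cmult) (auto simp: nn_integral_one_minus_cos_powr)
    finally show ?thesis
      by (auto simp: indicator_def ennreal_mult'[symmetric] mult_ac)
  qed
  have inner_x: "(\<integral>\<^sup>+x. ?g x t \<partial>lborel) = ennreal (indicator {0<..} t * (t powr (1 - p) / (1 + t\<^sup>2)))" for t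
  proof -
    have "(\<integral>\<^sup>+x. ?g x t \<partial>lborel)
        = (\<integral>\<^sup>+x. ennreal (indicator {0<..} t * t powr (- p - 1))
                 * ennreal (indicator {0<..} x * ((1 - cos (t * x)) * exp (- x))) \<partial>lborel)"
      by (intro nn_integral_cong) (auto simp: indicator_def ennreal_mult'[symmetric] mult_ac)
    also have "\<dots> = ennreal (indicator {0<..} t * t powr (- p - 1)) * ennreal (t\<^sup>2 / (1 + t\<^sup>2))"
      by (subst nn_integral_cmult) (auto simp: nn_integral_one_minus_cos_exp)
    also have "\<dots> = ennreal (indicator {0<..} t * (t powr (1 - p) / (1 + t\<^sup>2)))"
    proof (cases "t > 0")
      case True
      have "t powr (- p - 1) * (t\<^sup>2 / (1 + t\<^sup>2)) = t powr (1 - p) / (1 + t\<^sup>2)"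
        using True by (simp add: powr_diff powr_minus power2_eq_square field_simps)
      thus ?thesis using True by (simp add: ennreal_mult'[symmetric] indicator_def)
    qed (simp add: indicator_def)
    finally show ?thesis .
  qed
  have "ennreal (Gamma (p + 1)) * cos_kernel_const p = (\<integral>\<^sup>+x. \<integral>\<^sup>+t. ?g x t \<partial>lborel \<partial>lborel)"
    using assms nn_integral_powr_exp_Gamma[of "p + 1"] by (simp add: inner_t nn_integral_multc)
  also have "\<dots> = (\<integral>\<^sup>+t. \<integral>\<^sup>+x. ?g x t \<partial>lborel \<partial>lborel)"
    by (rule lborel_pair.Fubini'[symmetric]) simp
  also have "\<dots> = ennreal (Gamma (p/2) * Gamma (1 - p/2) / 2)"
    using nn_integral_powr_div_1_plus_square[OF assms] by (simp add: inner_x)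
  finally show ?thesis by (simp add: mult.commute)
qed

lemma Gamma_reflection_real:
  fixes x :: real
  assumes "0 < x" "x < 1"
  shows "Gamma x * Gamma (1 - x) = pi / sin (pi * x)"
proof -
  have "Gamma (complex_of_real x) * Gamma (1 - complex_of_real x) = of_real pi / sin (of_real pi * of_real x)"
    by (rule Gamma_reflection_complex)
  also have "Gamma (1 - complex_of_real x) = of_real (Gamma (1 - x))"
    by (metis Gamma_complex_of_real of_real_1 of_real_diff)
  also have "sin (complex_of_real pi * complex_of_real x) = of_real (sin (pi * x))"
    by (metis of_real_mult sin_of_real)
  finally have "complex_of_real (Gamma x * Gamma (1 - x)) = complex_of_real (pi / sin (pi * x))"
    by (simp add: Gamma_complex_of_real)
  thus ?thesis using of_real_eq_iff by blast
qed

lemma cos_kernel_const_eq: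
  assumes "0 < p" "p < 2"
  shows "cos_kernel_const p = ennreal (pi / (2 * sin (pi * p / 2) * Gamma (p + 1)))"
proof -
  have Gamma_pos: "Gamma (p + 1) > 0" using assms by auto
  have reflection: "Gamma (p/2) * Gamma (1 - p/2) = pi / sin (pi * p / 2)"
    using Gamma_reflection_real[of "p/2"] assms by simp
  have "cos_kernel_const p = cos_kernel_const p * ennreal (Gamma (p + 1)) * ennreal (1 / Gamma (p + 1))"
    using Gamma_pos by (simp add: mult.assoc ennreal_mult'[symmetric])
  also have "\<dots> = ennreal (Gamma (p/2) * Gamma (1 - p/2) / 2) * ennreal (1 / Gamma (p + 1))"
    using cos_kernel_const_mult_Gamma[OF assms] by simp
  also have "\<dots> = ennreal (Gamma (p/2) * Gamma (1 - p/2) / 2 * (1 / Gamma (p + 1)))"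
    using assms by (subst ennreal_mult'[symmetric]) auto
  also have "Gamma (p/2) * Gamma (1 - p/2) / 2 * (1 / Gamma (p + 1))
           = pi / (2 * sin (pi * p / 2) * Gamma (p + 1))"
    by (simp add: reflection)
  finally show ?thesis .
qed

lemma (in prob_space) expectation_cos_le_1:
  fixes f :: "'a \<Rightarrow> real"
  assumes [measurable]: "f \<in> borel_measurable M"
  shows "(LINT x|M. cos (f x)) \<le> 1"
proof -
  have "(\<lambda>x. cos (f x)) \<in> borel_measurable M"
    by measurable
  hence "integrable M (\<lambda>x. cos (f x))"
    by (intro integrable_const_bound[where B=1] AE_I2) (simp_all add: abs_cos_le_one)
  hence "(LINT x|M. cos (f x)) \<le> (LINT x|M. 1)"
    by (intro integral_mono) auto
  thus ?thesis by (simp add: prob_space)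
qed

lemma nn_integral_abs_powr_cos_kernel:
  fixes M :: "'a measure" and Y :: "'a \<Rightarrow> real"
  assumes "prob_space M" and [measurable]: "Y \<in> borel_measurable M"
  shows "(\<integral>\<^sup>+x. ennreal (\<bar>Y x\<bar> powr p) \<partial>M) * cos_kernel_const p
       = (\<integral>\<^sup>+t. ennreal (indicator {0<..} t * ((1 - (LINT x|M. cos (t * Y x))) * t powr (- p - 1))) \<partial>lborel)"
proof -
  interpret prob_space M by fact
  interpret pair_sigma_finite M lborel by unfold_locales
  have inner: "(\<integral>\<^sup>+x. ennreal (indicator {0<..} t * ((1 - cos (t * Y x)) * t powr (- p - 1))) \<partial>M)
      = ennreal (indicator {0<..} t * ((1 - (LINT x|M. cos (t * Y x))) * t powr (- p - 1)))" for t
  proof -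
    have cos_int: "integrable M (\<lambda>x. cos (t * Y x))"
      by (rule integrable_const_bound[where B=1]) (auto intro!: AE_I2)
    have "(\<integral>\<^sup>+x. ennreal (indicator {0<..} t * ((1 - cos (t * Y x)) * t powr (- p - 1))) \<partial>M)
        = ennreal (indicator {0<..} t * t powr (- p - 1)) * (\<integral>\<^sup>+x. ennreal (1 - cos (t * Y x)) \<partial>M)"
      by (subst nn_integral_cmult[symmetric])
         (auto intro!: nn_integral_cong simp: indicator_def ennreal_mult'[symmetric] mult_ac)
    also have "(\<integral>\<^sup>+x. ennreal (1 - cos (t * Y x)) \<partial>M) = ennreal (1 - (LINT x|M. cos (t * Y x)))"
      using cos_int by (subst nn_integral_eq_integral) (auto simp: prob_space)
    finally show ?thesis
      using expectation_cos_le_1[of "\<lambda>x. t * Y x"]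
      by (simp add: ennreal_mult'[symmetric] mult_ac indicator_def)
  qed
  have "(\<integral>\<^sup>+x. ennreal (\<bar>Y x\<bar> powr p) \<partial>M) * cos_kernel_const p
      = (\<integral>\<^sup>+x. \<integral>\<^sup>+t. ennreal (indicator {0<..} t * ((1 - cos (t * Y x)) * t powr (- p - 1))) \<partial>lborel \<partial>M)"
    by (simp add: nn_integral_one_minus_cos_powr nn_integral_multc)
  also have "\<dots> = (\<integral>\<^sup>+t. \<integral>\<^sup>+x. ennreal (indicator {0<..} t * ((1 - cos (t * Y x)) * t powr (- p - 1))) \<partial>M \<partial>lborel)"
    by (rule Fubini'[symmetric]) measurable
  finally show ?thesis by (simp only: inner)
qed

lemma abs_powr_moment_cos_integral:
  fixes M :: "'a measure" and Y :: "'a \<Rightarrow> real"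
  assumes "prob_space M" "Y \<in> borel_measurable M" "0 < p" "p < 2"
    and int: "set_integrable lborel {0<..} (\<lambda>t. (1 - (LINT x|M. cos (t * Y x))) * t powr (- p - 1))"
  shows "integrable M (\<lambda>x. \<bar>Y x\<bar> powr p)"
    and "(LINT x|M. \<bar>Y x\<bar> powr p) = 2 * sin (pi * p / 2) * Gamma (p + 1) / pi
           * (LBINT t:{0<..}. (1 - (LINT x|M. cos (t * Y x))) * t powr (- p - 1))"
proof -
  interpret prob_space M by fact
  define k where "k = pi / (2 * sin (pi * p / 2) * Gamma (p + 1))"
  define I where "I = (LBINT t:{0<..}. (1 - (LINT x|M. cos (t * Y x))) * t powr (- p - 1))"
  have k_pos: "0 < k"
    unfolding k_def using assms(3,4) by (auto intro!: divide_pos_pos mult_pos_pos sin_gt_zero)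
  have nonneg: "0 \<le> indicator {0<..} t * ((1 - (LINT x|M. cos (t * Y x))) * t powr (- p - 1))" for t
    using expectation_cos_le_1[of "\<lambda>x. t * Y x"] assms(2) by (simp add: indicator_def)
  have "(\<integral>\<^sup>+x. ennreal (\<bar>Y x\<bar> powr p) \<partial>M) * ennreal k
      = (\<integral>\<^sup>+x. ennreal (\<bar>Y x\<bar> powr p) \<partial>M) * cos_kernel_const p"
    by (simp add: cos_kernel_const_eq[OF assms(3,4)] k_def)
  also have "\<dots> = (\<integral>\<^sup>+t. ennreal (indicator {0<..} t * ((1 - (LINT x|M. cos (t * Y x))) * t powr (- p - 1))) \<partial>lborel)"
    by (rule nn_integral_abs_powr_cos_kernel[OF assms(1,2)])
  also have "\<dots> = ennreal I"
    using int nonneg unfolding I_def set_integrable_def set_lebesgue_integral_def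
    by (subst nn_integral_eq_integral) auto
  finally have eq: "(\<integral>\<^sup>+x. ennreal (\<bar>Y x\<bar> powr p) \<partial>M) * ennreal k = ennreal I" .
  have "0 \<le> I"
    unfolding I_def set_lebesgue_integral_def using nonneg
    by (intro integral_nonneg_AE) (auto simp: mult.commute)
  have nn: "(\<integral>\<^sup>+x. ennreal (\<bar>Y x\<bar> powr p) \<partial>M) = ennreal (I / k)"
  proof -
    have "(\<integral>\<^sup>+x. ennreal (\<bar>Y x\<bar> powr p) \<partial>M)
        = (\<integral>\<^sup>+x. ennreal (\<bar>Y x\<bar> powr p) \<partial>M) * ennreal k * ennreal (1 / k)"
      using k_pos by (simp add: mult.assoc ennreal_mult'[symmetric])
    also have "\<dots> = ennreal (I / k)"
      using \<open>0 \<le> I\<close> k_pos by (simp add: eq ennreal_mult'[symmetric] divide_inverse)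
    finally show ?thesis .
  qed
  show int_Y: "integrable M (\<lambda>x. \<bar>Y x\<bar> powr p)"
    using assms(2) by (intro integrableI_nonneg) (auto simp: nn)
  have "ennreal (LINT x|M. \<bar>Y x\<bar> powr p) = ennreal (I / k)"
    using nn_integral_eq_integral[OF int_Y] nn by simp
  hence "(LINT x|M. \<bar>Y x\<bar> powr p) = I / k"
    using \<open>0 \<le> I\<close> k_pos by (subst (asm) ennreal_inj) auto
  thus "(LINT x|M. \<bar>Y x\<bar> powr p) = 2 * sin (pi * p / 2) * Gamma (p + 1) / pi * I"
    by (simp add: k_def)
qed

lemma one_minus_cos_le_half_square: "1 - cos (x::real) \<le> x\<^sup>2 / 2"
proof -
  have "1 - cos x = 2 * (sin (x/2))\<^sup>2"
    using cos_double_sin[of "x/2"] by simp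
  also have "(sin (x/2))\<^sup>2 \<le> (x/2)\<^sup>2"
    using abs_sin_x_le_abs_x[of "x/2"] by (metis abs_ge_zero power2_abs power_mono)
  finally show ?thesis by (simp add: power_divide)
qed

lemma fractional_moment_constant:
  assumes "0 < lam" "lam < 1"
  shows "2 * sin (pi * (1 + lam) / 2) * Gamma ((1 + lam) + 1) / pi / (1 + lam)
       = lam / (sin (lam * pi / 2) * Gamma (1 - lam))"
proof -
  have sin_pos: "sin (lam * pi / 2) > 0" and cos_pos: "cos (lam * pi / 2) > 0"
    using assms by (auto intro!: sin_gt_zero cos_gt_zero simp: field_simps)
  have Gamma_pos: "Gamma (1 - lam) > 0" using assms by simp
  have "lam \<notin> \<int>\<^sub>\<le>\<^sub>0" "1 + lam \<notin> \<int>\<^sub>\<le>\<^sub>0"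
    using assms by (auto dest: nonpos_Ints_nonpos)
  hence "Gamma ((1 + lam) + 1) = (1 + lam) * (lam * Gamma lam)"
    using Gamma_plus1[of lam] Gamma_plus1[of "1 + lam"] by (simp add: add.commute)
  moreover have "sin (pi * (1 + lam) / 2) = cos (lam * pi / 2)"
    using sin_add[of "pi / 2" "lam * pi / 2"] by (simp add: field_simps)
  ultimately have "2 * sin (pi * (1 + lam) / 2) * Gamma ((1 + lam) + 1) / pi / (1 + lam)
      = 2 * cos (lam * pi / 2) * lam * Gamma lam / pi"
    using assms by simp
  also have "Gamma lam = pi / (2 * sin (lam * pi / 2) * cos (lam * pi / 2) * Gamma (1 - lam))"
  proof -
    have "Gamma lam * Gamma (1 - lam) = pi / (2 * sin (lam * pi / 2) * cos (lam * pi / 2))"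
      using Gamma_reflection_real[OF assms] sin_double[of "lam * pi / 2"] by (simp add: mult.commute)
    thus ?thesis using Gamma_pos sin_pos cos_pos by (simp add: field_simps)
  qed
  also have "2 * cos (lam * pi / 2) * lam * (pi / (2 * sin (lam * pi / 2) * cos (lam * pi / 2) * Gamma (1 - lam))) / pi
      = lam / (sin (lam * pi / 2) * Gamma (1 - lam))"
    using cos_pos by simp
  finally show ?thesis .
qed

section \<open>The geometric stable law\<close>

text \<open>
  With \<open>s = \<sigma>\<^sup>\<alpha>\<close> and \<open>\<theta> = \<beta> tan (\<pi> \<alpha> / 2)\<close>, the characteristic function is \<open>\<phi>(t) = 1 / (A t - i B t)\<close> for
  \<open>t > 0\<close>, hence \<open>Re (exp (-i \<mu> t) \<phi>(t)) = N t / D t\<close>. \<open>G\<close> is the integrand of the moment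
  formula, \<open>T1\<close>, \<open>T2\<close>, \<open>T3\<close> are the three integrands of the theorem, and
  \<open>H = \<mu> T1 - \<alpha> s T2 + 2 \<alpha> s T3\<close> is \<open>g' t * t powr (- p)\<close>.
\<close>

locale geometric_stable =
  fixes \<alpha> \<theta> s \<mu> lam :: real
  assumes alpha_gt_1: "1 < \<alpha>" and alpha_lt_2: "\<alpha> < 2" and s_pos: "0 < s"
    and lam_pos: "0 < lam" and lam_lt: "lam < \<alpha> - 1"
begin

definition "a t = s * t powr \<alpha>"
definition "A t = 1 + a t"
definition "B t = \<theta> * a t"
definition "D t = (A t)\<^sup>2 + (B t)\<^sup>2"
definition "N t = A t * cos (\<mu> * t) + B t * sin (\<mu> * t)"
definition "g t = 1 - N t / D t"
definition "p = 1 + lam"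

definition "G t = g t * t powr (- p - 1)"
definition "T1 t = t powr (-(1 + lam)) * ((A t * sin (\<mu> * t) - B t * cos (\<mu> * t)) / D t)"
definition "T2 t = t powr (\<alpha> - lam - 2) * ((cos (\<mu> * t) + \<theta> * sin (\<mu> * t)) / D t)"
definition "T3 t = t powr (\<alpha> - lam - 2) * (N t * (A t + \<theta> * B t) / (D t)\<^sup>2)"
definition "H t = \<mu> * T1 t - \<alpha> * s * T2 t + 2 * \<alpha> * s * T3 t"

lemma p_gt_1: "1 < p" and p_lt_2: "p < 2"
  unfolding p_def using lam_pos lam_lt alpha_lt_2 by auto

lemma a_nonneg: "0 \<le> a t"
  unfolding a_def using s_pos by simp

lemma A_ge_1: "1 \<le> A t"
  unfolding A_def using a_nonneg by simp

lemma D_ge: "1 \<le> D t" "(A t)\<^sup>2 \<le> D t" "(B t)\<^sup>2 \<le> D t"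
proof -
  have "1 \<le> (A t)\<^sup>2" using A_ge_1[of t] by (simp add: one_le_power)
  moreover have "0 \<le> (B t)\<^sup>2" "0 \<le> (A t)\<^sup>2" by simp_all
  ultimately show "1 \<le> D t" "(A t)\<^sup>2 \<le> D t" "(B t)\<^sup>2 \<le> D t" unfolding D_def by linarith+
qed

lemma D_pos: "0 < D t"
  using D_ge(1)[of t] by simp

lemma D_nonzero: "D t \<noteq> 0"
  using D_pos[of t] by simp

lemma A_le_D: "A t \<le> D t"
proof -
  have "A t \<le> (A t)\<^sup>2" using A_ge_1[of t] by (simp add: power2_eq_square)
  thus ?thesis using D_ge(2)[of t] by simp
qed

lemma abs_B_le_D: "\<bar>B t\<bar> \<le> D t"
proof (cases "\<bar>B t\<bar> \<le> 1")
  case False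
  have "\<bar>B t\<bar> * 1 \<le> \<bar>B t\<bar> * \<bar>B t\<bar>" using False by (intro mult_left_mono) auto
  hence "\<bar>B t\<bar> \<le> (B t)\<^sup>2" by (simp add: power2_eq_square)
  thus ?thesis using D_ge(3)[of t] by simp
qed (use D_ge(1)[of t] in simp)

lemma A_abs_B_le_D: "A t * \<bar>B t\<bar> \<le> D t"
proof -
  have "2 * (A t * \<bar>B t\<bar>) \<le> (A t)\<^sup>2 + (B t)\<^sup>2"
    using sum_squares_bound[of "A t" "\<bar>B t\<bar>"] by (simp add: power2_abs)
  moreover have "0 \<le> A t * \<bar>B t\<bar>" using A_ge_1[of t] by simp
  ultimately show ?thesis unfolding D_def by linarith
qed

lemma abs_N_le_D: "\<bar>N t\<bar> \<le> D t"
proof -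
  have lagrange: "(x * v + y * u)\<^sup>2 + (x * u - y * v)\<^sup>2 = (x\<^sup>2 + y\<^sup>2) * (u\<^sup>2 + v\<^sup>2)" for x y u v :: real
    by (simp add: power2_eq_square algebra_simps)
  have "(N t)\<^sup>2 + (A t * sin (\<mu> * t) - B t * cos (\<mu> * t))\<^sup>2 = D t"
    using lagrange[of "A t" "cos (\<mu> * t)" "B t" "sin (\<mu> * t)"] unfolding N_def D_def by simp
  hence "(N t)\<^sup>2 \<le> D t"
    by (metis le_add_same_cancel1 zero_le_power2)
  also have "D t \<le> (D t)\<^sup>2" using D_ge(1)[of t] by (simp add: power2_eq_square)
  finally show ?thesis by (metis abs_le_square_iff abs_of_pos D_pos)
qed

lemma abs_N_le: "\<bar>N t\<bar> \<le> A t + \<bar>B t\<bar>"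
proof -
  have "\<bar>A t * cos (\<mu> * t)\<bar> \<le> A t" "\<bar>B t * sin (\<mu> * t)\<bar> \<le> \<bar>B t\<bar>"
    using A_ge_1[of t] by (simp_all add: abs_mult mult_left_le)
  thus ?thesis unfolding N_def
    using abs_triangle_ineq[of "A t * cos (\<mu> * t)" "B t * sin (\<mu> * t)"] by linarith
qed

lemma g_nonneg: "0 \<le> g t"
  unfolding g_def using abs_N_le_D[of t] D_pos[of t] by (simp add: divide_le_eq_1 abs_le_iff)

lemma g_le_2: "g t \<le> 2"
proof -
  have "- 1 \<le> N t / D t" using abs_N_le_D[of t] D_pos[of t] by (simp add: le_divide_eq abs_le_iff)
  thus ?thesis unfolding g_def by simp
qed

lemma g_le: "g t \<le> (1 + 2 * \<bar>\<theta>\<bar>) * a t + \<mu>\<^sup>2 * t\<^sup>2 / 2"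
proof -
  have A_a: "A t * a t \<le> D t * a t" using A_le_D[of t] a_nonneg[of t] by (rule mult_right_mono)
  have A_cos: "A t * (1 - cos (\<mu> * t)) \<le> D t * (1 - cos (\<mu> * t))"
    using A_le_D[of t] by (simp add: mult_right_mono)
  have B_sq: "(B t)\<^sup>2 \<le> D t * \<bar>B t\<bar>"
  proof -
    have "(B t)\<^sup>2 = \<bar>B t\<bar> * \<bar>B t\<bar>" by (metis abs_mult_self_eq power2_eq_square)
    also have "\<dots> \<le> D t * \<bar>B t\<bar>" using abs_B_le_D[of t] by (intro mult_right_mono) auto
    finally show ?thesis .
  qed
  have B_sin: "- (B t * sin (\<mu> * t)) \<le> D t * \<bar>B t\<bar>"
  proof -
    have "- (B t * sin (\<mu> * t)) \<le> \<bar>B t\<bar>" using abs_sin_le_one[of "\<mu> * t"]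
      by (metis abs_ge_minus_self abs_mult mult.commute mult_left_le abs_ge_zero order.trans)
    also have "\<dots> \<le> D t * \<bar>B t\<bar>" using D_ge(1)[of t] by (simp add: mult_le_cancel_right1)
    finally show ?thesis .
  qed
  have "g t = (A t * a t + A t * (1 - cos (\<mu> * t)) + (B t)\<^sup>2 - B t * sin (\<mu> * t)) / D t"
    unfolding g_def N_def using D_pos[of t] by (simp add: field_simps D_def A_def power2_eq_square)
  also have "\<dots> \<le> (D t * a t + D t * (1 - cos (\<mu> * t)) + D t * \<bar>B t\<bar> + D t * \<bar>B t\<bar>) / D t"
    using A_a A_cos B_sq B_sin D_pos[of t] by (intro divide_right_mono) auto
  also have "\<dots> = a t + (1 - cos (\<mu> * t)) + 2 * \<bar>\<theta>\<bar> * a t"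
    using D_pos[of t] a_nonneg[of t] by (simp add: field_simps B_def abs_mult)
  finally show ?thesis
    using one_minus_cos_le_half_square[of "\<mu> * t"] by (simp add: power_mult_distrib algebra_simps)
qed

definition "a' t = s * (\<alpha> * t powr (\<alpha> - 1))"
definition "g' t = \<mu> * (A t * sin (\<mu> * t) - B t * cos (\<mu> * t)) / D t
   - a' t * (cos (\<mu> * t) + \<theta> * sin (\<mu> * t)) / D t
   + 2 * a' t * N t * (A t + \<theta> * B t) / (D t)\<^sup>2"

lemma A_deriv: "0 < t \<Longrightarrow> DERIV A t :> a' t"
  unfolding A_def a_def a'_def by (auto intro!: derivative_eq_intros)

lemma B_deriv: "0 < t \<Longrightarrow> DERIV B t :> \<theta> * a' t"
  unfolding B_def a_def a'_def by (auto intro!: derivative_eq_intros)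

lemma N_deriv:
  "0 < t \<Longrightarrow> DERIV N t :> a' t * cos (\<mu> * t) - A t * (\<mu> * sin (\<mu> * t))
                          + \<theta> * a' t * sin (\<mu> * t) + B t * (\<mu> * cos (\<mu> * t))"
  unfolding N_def by (rule derivative_eq_intros A_deriv B_deriv refl | simp add: algebra_simps)+

lemma D_deriv: "0 < t \<Longrightarrow> DERIV D t :> 2 * a' t * (A t + \<theta> * B t)"
  unfolding D_def by (rule derivative_eq_intros A_deriv B_deriv refl | simp add: algebra_simps)+

lemma g_deriv:
  assumes "0 < t"
  shows "DERIV g t :> g' t"
proof -
  have "DERIV g t :> - (((a' t * cos (\<mu> * t) - A t * (\<mu> * sin (\<mu> * t)) + \<theta> * a' t * sin (\<mu> * t)
                          + B t * (\<mu> * cos (\<mu> * t))) * D t - N t * (2 * a' t * (A t + \<theta> * B t)))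
                       / (D t * D t))"
    unfolding g_def
    by (rule derivative_eq_intros N_deriv[OF assms] D_deriv[OF assms] refl
        | simp add: D_nonzero)+
  moreover have "- (((a' t * cos (\<mu> * t) - A t * (\<mu> * sin (\<mu> * t)) + \<theta> * a' t * sin (\<mu> * t)
                          + B t * (\<mu> * cos (\<mu> * t))) * D t - N t * (2 * a' t * (A t + \<theta> * B t)))
                       / (D t * D t)) = g' t"
    unfolding g'_def using D_pos[of t] by (simp add: field_simps power2_eq_square)
  ultimately show ?thesis by simp
qed

lemma g'_mult_powr:
  assumes "0 < t"
  shows "g' t * t powr (- p) = H t"
proof -
  have "g' t * t powr (- p)
      = \<mu> * (t powr (- p) * ((A t * sin (\<mu> * t) - B t * cos (\<mu> * t)) / D t))
        - \<alpha> * s * ((t powr (\<alpha> - 1) * t powr (- p)) * ((cos (\<mu> * t) + \<theta> * sin (\<mu> * t)) / D t))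
        + 2 * \<alpha> * s * ((t powr (\<alpha> - 1) * t powr (- p)) * (N t * (A t + \<theta> * B t) / (D t)\<^sup>2))"
    unfolding g'_def a'_def using D_pos[of t] by (simp add: field_simps)
  moreover have "\<alpha> - lam - 2 = (\<alpha> - 1) + (- p)" unfolding p_def by simp
  hence "t powr (\<alpha> - 1) * t powr (- p) = t powr (\<alpha> - lam - 2)" by (simp only: powr_add)
  ultimately show ?thesis unfolding H_def T1_def T2_def T3_def by (simp add: p_def)
qed

lemma continuous_on_basic:
  "continuous_on {0<..} a" "continuous_on {0<..} A" "continuous_on {0<..} B"
  "continuous_on {0<..} D" "continuous_on {0<..} N" "continuous_on {0<..} g"
proof -
  show ca: "continuous_on {0<..} a" unfolding a_def by (intro continuous_intros) auto
  show cA: "continuous_on {0<..} A" unfolding A_def by (intro continuous_intros ca)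
  show cB: "continuous_on {0<..} B" unfolding B_def by (intro continuous_intros ca)
  show cD: "continuous_on {0<..} D" unfolding D_def by (intro continuous_intros cA cB)
  show cN: "continuous_on {0<..} N" unfolding N_def by (intro continuous_intros cA cB)
  show "continuous_on {0<..} g" unfolding g_def by (intro continuous_intros cN cD) (simp add: D_nonzero)
qed

lemma continuous_on_integrands:
  "continuous_on {0<..} G" "continuous_on {0<..} T1" "continuous_on {0<..} T2"
  "continuous_on {0<..} T3" "continuous_on {0<..} H"
proof -
  have "\<forall>t\<in>{0<..}. D t \<noteq> 0" "\<forall>t\<in>{0<..}. (D t)\<^sup>2 \<noteq> 0" by (simp_all add: D_nonzero)
  note c = continuous_on_basic this
  show "continuous_on {0<..} G" "continuous_on {0<..} T1" "continuous_on {0<..} T2" "continuous_on {0<..} T3"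
    unfolding G_def T1_def T2_def T3_def by (intro continuous_intros c; auto)+
  thus "continuous_on {0<..} H" unfolding H_def by (intro continuous_intros)
qed

definition "majorant = powr_split (\<alpha> - lam - 2) (- p)"

lemma majorant_exponents: "-1 < \<alpha> - lam - 2" "\<alpha> - lam - 2 < 0" "- p < -1"
  using lam_pos lam_lt alpha_lt_2 p_gt_1 by auto

lemma majorant_nonneg: "0 \<le> majorant t"
  unfolding majorant_def by (rule powr_split_nonneg)

lemma powr_le_majorant_0_1: "0 < t \<Longrightarrow> t \<le> 1 \<Longrightarrow> \<alpha> - lam - 2 \<le> e \<Longrightarrow> t powr e \<le> majorant t"
  unfolding majorant_def by (rule powr_le_powr_split_0_1)

lemma powr_le_majorant_1_infty: "1 \<le> t \<Longrightarrow> e \<le> - p \<Longrightarrow> t powr e \<le> majorant t"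
  unfolding majorant_def by (rule powr_le_powr_split_1_infty)

lemma set_integrable_majorant_bound:
  assumes "continuous_on {0<..} f" "\<And>t. 0 < t \<Longrightarrow> \<bar>f t\<bar> \<le> c * majorant t"
  shows "set_integrable lborel {0<..} f"
  using majorant_exponents assms unfolding majorant_def
  by (intro set_integrable_powr_split_bound) auto

lemma powr_div_D_le_majorant:
  assumes "0 < t"
  shows "t powr (\<alpha> - lam - 2) / D t \<le> (1 + 1/s) * majorant t"
proof (cases "t \<le> 1")
  case True
  have "t powr (\<alpha> - lam - 2) / D t \<le> t powr (\<alpha> - lam - 2)"
    using D_ge(1)[of t] by (simp add: divide_le_eq mult_le_cancel_left1)
  also have "\<dots> \<le> majorant t" using powr_le_majorant_0_1[OF assms True] by simp
  also have "\<dots> \<le> (1 + 1/s) * majorant t" using s_pos majorant_nonneg[of t] by (simp add: mult_le_cancel_right1)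
  finally show ?thesis .
next
  case False
  have "a t > 0" unfolding a_def using s_pos assms by simp
  moreover have "a t \<le> D t" using A_le_D[of t] unfolding A_def by simp
  ultimately have "t powr (\<alpha> - lam - 2) / D t \<le> t powr (\<alpha> - lam - 2) / a t"
    by (intro divide_left_mono) auto
  also have "\<dots> = (1/s) * t powr (- p - 1)"
    unfolding a_def p_def using assms s_pos by (simp add: powr_diff powr_minus field_simps powr_add)
  also have "\<dots> \<le> (1/s) * majorant t"
    using powr_le_majorant_1_infty[of t "- p - 1"] False s_pos by (intro mult_left_mono) auto
  also have "\<dots> \<le> (1 + 1/s) * majorant t" using s_pos majorant_nonneg[of t] by (intro mult_right_mono) auto
  finally show ?thesis .
qed

lemma G_bound:
  assumes "0 < t"
  shows "\<bar>G t\<bar> \<le> ((1 + 2 * \<bar>\<theta>\<bar>) * s + \<mu>\<^sup>2 / 2 + 2) * majorant t"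
proof -
  have "G t \<le> ((1 + 2 * \<bar>\<theta>\<bar>) * s + \<mu>\<^sup>2 / 2 + 2) * majorant t"
  proof (cases "t \<le> 1")
    case True
    have "G t \<le> ((1 + 2 * \<bar>\<theta>\<bar>) * a t + \<mu>\<^sup>2 * t\<^sup>2 / 2) * t powr (- p - 1)"
      unfolding G_def using g_le[of t] by (intro mult_right_mono) auto
    also have "\<dots> = (1 + 2 * \<bar>\<theta>\<bar>) * s * t powr (\<alpha> - p - 1) + \<mu>\<^sup>2 / 2 * t powr (1 - p)"
    proof -
      have "\<alpha> - p - 1 = \<alpha> + (- p - 1)" "1 - p = 2 + (- p - 1)" by simp_all
      hence "t powr \<alpha> * t powr (- p - 1) = t powr (\<alpha> - p - 1)"
        "t powr 2 * t powr (- p - 1) = t powr (1 - p)"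
        by (simp_all only: powr_add)
      moreover have "t powr 2 = t\<^sup>2" using assms by (simp add: powr_numeral)
      ultimately show ?thesis unfolding a_def by (simp add: algebra_simps)
    qed
    also have "\<dots> \<le> (1 + 2 * \<bar>\<theta>\<bar>) * s * majorant t + \<mu>\<^sup>2 / 2 * majorant t"
      using powr_le_majorant_0_1[OF assms True] alpha_lt_2 s_pos
      by (intro add_mono mult_left_mono) (auto simp: p_def)
    finally show ?thesis
      using majorant_nonneg[of t] by (simp add: algebra_simps)
  next
    case False
    have "G t \<le> 2 * t powr (- p - 1)" unfolding G_def using g_le_2[of t] by (intro mult_right_mono) auto
    also have "\<dots> \<le> 2 * majorant t" using powr_le_majorant_1_infty[of t "- p - 1"] False by simp
    also have "\<dots> \<le> ((1 + 2 * \<bar>\<theta>\<bar>) * s + \<mu>\<^sup>2 / 2 + 2) * majorant t"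
      using majorant_nonneg[of t] s_pos by (intro mult_right_mono) auto
    finally show ?thesis .
  qed
  thus ?thesis using g_nonneg[of t] by (simp add: G_def)
qed

lemma T1_bound:
  assumes "0 < t"
  shows "\<bar>T1 t\<bar> \<le> (\<bar>\<mu>\<bar> + \<bar>\<theta>\<bar> * s + 2) * majorant t"
proof -
  have T1_abs: "\<bar>T1 t\<bar> = t powr (- p) * (\<bar>A t * sin (\<mu> * t) - B t * cos (\<mu> * t)\<bar> / D t)"
    unfolding T1_def p_def using D_pos[of t] by (simp add: abs_mult)
  have tri: "\<bar>A t * sin (\<mu> * t) - B t * cos (\<mu> * t)\<bar> \<le> A t * \<bar>sin (\<mu> * t)\<bar> + \<bar>B t\<bar>"
  proof -
    have "\<bar>B t * cos (\<mu> * t)\<bar> \<le> \<bar>B t\<bar>" by (simp add: abs_mult mult_left_le)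
    thus ?thesis using abs_triangle_ineq4[of "A t * sin (\<mu> * t)" "B t * cos (\<mu> * t)"] A_ge_1[of t]
      by (simp add: abs_mult)
  qed
  show ?thesis
  proof (cases "t \<le> 1")
    case True
    have "\<bar>A t * sin (\<mu> * t) - B t * cos (\<mu> * t)\<bar> / D t \<le> (A t * \<bar>sin (\<mu> * t)\<bar> + \<bar>B t\<bar>) / D t"
      using tri D_pos[of t] by (intro divide_right_mono) auto
    also have "\<dots> = (A t / D t) * \<bar>sin (\<mu> * t)\<bar> + \<bar>B t\<bar> / D t"
      by (simp add: add_divide_distrib)
    also have "\<dots> \<le> 1 * (\<bar>\<mu>\<bar> * t) + \<bar>B t\<bar>"
    proof (intro add_mono mult_mono)
      show "A t / D t \<le> 1" using A_le_D[of t] D_pos[of t] by simp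
      show "\<bar>sin (\<mu> * t)\<bar> \<le> \<bar>\<mu>\<bar> * t"
        using abs_sin_x_le_abs_x[of "\<mu> * t"] assms by (simp add: abs_mult)
      show "\<bar>B t\<bar> / D t \<le> \<bar>B t\<bar>"
        using D_ge(1)[of t] by (simp add: divide_le_eq mult_le_cancel_left1)
    qed (use assms in auto)
    finally have "\<bar>T1 t\<bar> \<le> t powr (- p) * (\<bar>\<mu>\<bar> * t + \<bar>\<theta>\<bar> * s * t powr \<alpha>)"
      unfolding T1_abs B_def a_def using s_pos by (intro mult_left_mono) (auto simp: abs_mult)
    also have "\<dots> = \<bar>\<mu>\<bar> * t powr (1 - p) + \<bar>\<theta>\<bar> * s * t powr (\<alpha> - p)"
      using assms by (simp add: algebra_simps powr_add[symmetric] powr_diff powr_minus divide_inverse)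
    also have "\<dots> \<le> \<bar>\<mu>\<bar> * majorant t + \<bar>\<theta>\<bar> * s * majorant t"
      using powr_le_majorant_0_1[OF assms True] alpha_lt_2 s_pos
      by (intro add_mono mult_left_mono) (auto simp: p_def)
    also have "\<dots> \<le> (\<bar>\<mu>\<bar> + \<bar>\<theta>\<bar> * s + 2) * majorant t"
      using majorant_nonneg[of t] by (simp add: algebra_simps)
    finally show ?thesis .
  next
    case False
    have "A t * \<bar>sin (\<mu> * t)\<bar> \<le> A t"
      using A_ge_1[of t] by (simp add: mult_left_le)
    hence "\<bar>A t * sin (\<mu> * t) - B t * cos (\<mu> * t)\<bar> \<le> 2 * D t"
      using tri A_le_D[of t] abs_B_le_D[of t] by linarith
    hence "\<bar>T1 t\<bar> \<le> t powr (- p) * 2"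
      unfolding T1_abs using D_pos[of t] by (intro mult_left_mono) (auto simp: divide_le_eq)
    also have "\<dots> \<le> majorant t * 2"
      using powr_le_majorant_1_infty[of t "- p"] False by (intro mult_right_mono) auto
    also have "\<dots> \<le> (\<bar>\<mu>\<bar> + \<bar>\<theta>\<bar> * s + 2) * majorant t"
      using majorant_nonneg[of t] s_pos by (simp add: algebra_simps)
    finally show ?thesis .
  qed
qed

lemma T2_bound:
  assumes "0 < t"
  shows "\<bar>T2 t\<bar> \<le> (1 + \<bar>\<theta>\<bar>) * (1 + 1/s) * majorant t"
proof -
  have "\<bar>cos (\<mu> * t) + \<theta> * sin (\<mu> * t)\<bar> \<le> 1 + \<bar>\<theta>\<bar>"
  proof -
    have "\<bar>\<theta> * sin (\<mu> * t)\<bar> \<le> \<bar>\<theta>\<bar>" by (simp add: abs_mult mult_left_le)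
    thus ?thesis using abs_triangle_ineq[of "cos (\<mu> * t)" "\<theta> * sin (\<mu> * t)"] abs_cos_le_one[of "\<mu> * t"]
      by linarith
  qed
  hence "\<bar>T2 t\<bar> \<le> t powr (\<alpha> - lam - 2) * ((1 + \<bar>\<theta>\<bar>) / D t)"
    unfolding T2_def using D_pos[of t]
    by (auto simp: abs_mult intro!: mult_left_mono divide_right_mono)
  also have "\<dots> = (1 + \<bar>\<theta>\<bar>) * (t powr (\<alpha> - lam - 2) / D t)" by simp
  also have "\<dots> \<le> (1 + \<bar>\<theta>\<bar>) * ((1 + 1/s) * majorant t)"
    using powr_div_D_le_majorant[OF assms] by (intro mult_left_mono) auto
  finally show ?thesis by (simp add: mult.assoc)
qed

lemma T3_bound:
  assumes "0 < t"
  shows "\<bar>T3 t\<bar> \<le> 2 * (1 + \<bar>\<theta>\<bar>) * (1 + 1/s) * majorant t"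
proof -
  have "\<bar>A t + \<theta> * B t\<bar> \<le> A t + \<bar>\<theta>\<bar> * \<bar>B t\<bar>"
    using abs_triangle_ineq[of "A t" "\<theta> * B t"] A_ge_1[of t] by (simp add: abs_mult)
  hence "\<bar>N t * (A t + \<theta> * B t)\<bar> \<le> (A t + \<bar>B t\<bar>) * (A t + \<bar>\<theta>\<bar> * \<bar>B t\<bar>)"
    unfolding abs_mult using abs_N_le[of t] by (intro mult_mono) auto
  also have "\<dots> = (A t)\<^sup>2 + \<bar>\<theta>\<bar> * (A t * \<bar>B t\<bar>) + A t * \<bar>B t\<bar> + \<bar>\<theta>\<bar> * (B t)\<^sup>2"
    by (simp add: algebra_simps power2_eq_square abs_mult_self_eq)
  also have "\<dots> \<le> D t + \<bar>\<theta>\<bar> * D t + D t + \<bar>\<theta>\<bar> * D t"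
    using D_ge(2,3)[of t] A_abs_B_le_D[of t]
    by (intro add_mono mult_left_mono) auto
  also have "\<dots> = 2 * (1 + \<bar>\<theta>\<bar>) * D t"
    by (simp add: algebra_simps)
  finally have bound: "\<bar>N t * (A t + \<theta> * B t) / (D t)\<^sup>2\<bar> \<le> 2 * (1 + \<bar>\<theta>\<bar>) / D t"
    using D_pos[of t] by (simp add: abs_divide divide_le_eq power2_eq_square)
  have "\<bar>T3 t\<bar> = t powr (\<alpha> - lam - 2) * \<bar>N t * (A t + \<theta> * B t) / (D t)\<^sup>2\<bar>"
    unfolding T3_def by (simp only: abs_mult abs_of_nonneg[OF powr_ge_zero])
  also have "\<dots> \<le> t powr (\<alpha> - lam - 2) * (2 * (1 + \<bar>\<theta>\<bar>) / D t)"
    by (rule mult_left_mono[OF bound powr_ge_zero])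
  also have "\<dots> = 2 * (1 + \<bar>\<theta>\<bar>) * (t powr (\<alpha> - lam - 2) / D t)" by simp
  also have "\<dots> \<le> 2 * (1 + \<bar>\<theta>\<bar>) * ((1 + 1/s) * majorant t)"
    using powr_div_D_le_majorant[OF assms] by (intro mult_left_mono) auto
  finally show ?thesis by (simp add: mult.assoc)
qed

lemma set_integrable_integrands:
  "set_integrable lborel {0<..} G" "set_integrable lborel {0<..} T1"
  "set_integrable lborel {0<..} T2" "set_integrable lborel {0<..} T3"
  "set_integrable lborel {0<..} H"
proof -
  show G: "set_integrable lborel {0<..} G" and T: "set_integrable lborel {0<..} T1"
    "set_integrable lborel {0<..} T2" "set_integrable lborel {0<..} T3"
    using continuous_on_integrands G_bound T1_bound T2_bound T3_bound
    by (auto intro!: set_integrable_majorant_bound)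
  show "set_integrable lborel {0<..} H"
    unfolding H_def[abs_def] using T
    by (intro set_integral_add set_integral_diff set_integrable_mult_right) auto
qed

lemma g_powr_tendsto_0_at_right: "((\<lambda>t. g t * t powr (- p)) \<longlongrightarrow> 0) (at_right 0)"
proof -
  define u where "u t = (1 + 2 * \<bar>\<theta>\<bar>) * s * t powr (\<alpha> - p) + \<mu>\<^sup>2 / 2 * t powr (2 - p)" for t
  have "(u \<longlongrightarrow> (1 + 2 * \<bar>\<theta>\<bar>) * s * 0 + \<mu>\<^sup>2 / 2 * 0) (at_right 0)"
    using p_lt_2 lam_lt unfolding u_def[abs_def] p_def
    by (intro tendsto_intros tendsto_zero_powrI tendsto_ident_at)
       (auto simp: eventually_at_right_less[THEN eventually_mono])
  hence u_lim: "(u \<longlongrightarrow> 0) (at_right 0)" by simp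
  have "g t * t powr (- p) \<le> u t" if t: "0 < t" for t
  proof -
    have "g t * t powr (- p) \<le> ((1 + 2 * \<bar>\<theta>\<bar>) * a t + \<mu>\<^sup>2 * t\<^sup>2 / 2) * t powr (- p)"
      using g_le[of t] by (intro mult_right_mono) auto
    also have "\<dots> = u t"
    proof -
      have "\<alpha> - p = \<alpha> + (- p)" "2 - p = 2 + (- p)" by simp_all
      hence "t powr \<alpha> * t powr (- p) = t powr (\<alpha> - p)" "t powr 2 * t powr (- p) = t powr (2 - p)"
        by (simp_all only: powr_add)
      moreover have "t powr 2 = t\<^sup>2" using t by (simp add: powr_numeral)
      ultimately show ?thesis unfolding a_def u_def by (simp add: algebra_simps)
    qed
    finally show ?thesis .
  qed
  hence "\<forall>\<^sub>F t in at_right 0. g t * t powr (- p) \<le> u t"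
    by (auto intro: eventually_mono[OF eventually_at_right_less])
  moreover have "\<forall>\<^sub>F t in at_right 0. 0 \<le> g t * t powr (- p)"
    by (intro always_eventually allI) (simp add: g_nonneg)
  ultimately show ?thesis
    by (rule tendsto_sandwich[OF _ _ tendsto_const u_lim, rotated])
qed

lemma g_powr_tendsto_0_at_top: "((\<lambda>t. g t * t powr (- p)) \<longlongrightarrow> 0) at_top"
proof (rule Lim_null_comparison)
  show "\<forall>\<^sub>F t in at_top. norm (g t * t powr (- p)) \<le> 2 * t powr (- p)"
    using g_nonneg g_le_2 by (intro always_eventually allI) (simp add: abs_mult mult_right_mono)
  show "((\<lambda>t. 2 * t powr (- p)) \<longlongrightarrow> 0) at_top"
    using tendsto_mult_right_zero[OF tendsto_neg_powr[OF _ filterlim_ident, of "- p"]] p_gt_1 by simp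
qed

lemma G_integral_by_parts: "(LBINT t:{0<..}. G t) = (LBINT t:{0<..}. H t) / p"
proof -
  define F where "F t = g t * t powr (- p)" for t
  define f where "f t = H t - p * G t" for t
  have f_int: "set_integrable lborel {0<..} f"
    unfolding f_def[abs_def] using set_integrable_integrands
    by (intro set_integral_diff set_integrable_mult_right) auto
  have f_cont: "continuous_on {0<..} f"
    unfolding f_def[abs_def] using continuous_on_integrands by (intro continuous_intros)
  have eint: "einterval 0 \<infinity> = {0::real<..}" by (auto simp: einterval_iff)
  have "(LBINT t=0..\<infinity>. f t) = 0 - 0"
  proof (rule interval_integral_FTC_integrable[where F=F])
    fix t :: real assume "0 < ereal t" "ereal t < \<infinity>"
    hence t: "0 < t" by simp
    have "DERIV F t :> g' t * t powr (- p) + g t * (- p * t powr (- p - 1))"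
      unfolding F_def by (rule derivative_eq_intros g_deriv[OF t] has_real_derivative_powr[OF t] refl | simp)+
    thus "(F has_vector_derivative f t) (at t)"
      using g'_mult_powr[OF t] unfolding f_def G_def
      by (simp add: has_real_derivative_iff_has_vector_derivative[symmetric] algebra_simps)
    show "isCont f t"
      using f_cont t by (simp add: continuous_on_eq_continuous_at)
  next
    show "((F \<circ> real_of_ereal) \<longlongrightarrow> 0) (at_right 0)"
      using g_powr_tendsto_0_at_right unfolding F_def[abs_def]
      by (simp add: zero_ereal_def ereal_tendsto_simps)
    show "((F \<circ> real_of_ereal) \<longlongrightarrow> 0) (at_left \<infinity>)"
      using g_powr_tendsto_0_at_top unfolding F_def[abs_def]
      by (simp add: ereal_tendsto_simps)
  qed (use f_int eint in auto)
  hence "(LBINT t:{0<..}. f t) = 0" by (simp add: interval_lebesgue_integral_0_infty)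
  moreover have "(LBINT t:{0<..}. f t) = (LBINT t:{0<..}. H t) - p * (LBINT t:{0<..}. G t)"
    unfolding f_def using set_integrable_integrands
    by (simp add: set_integral_diff set_integrable_mult_right)
  ultimately show ?thesis using p_gt_1 by (simp add: field_simps)
qed

lemma expectation_cos_shift:
  fixes M :: "'b measure" and X :: "'b \<Rightarrow> real"
  assumes "prob_space M" and [measurable]: "X \<in> borel_measurable M"
    and char: "char (distr M borel X) t
               = inverse (1 + complex_of_real (s * \<bar>t\<bar> powr \<alpha>) * (1 - \<i> * complex_of_real (\<theta> * sgn t)))"
    and "0 < t"
  shows "(LINT x|M. cos (t * (X x - \<mu>))) = N t / D t"
proof -
  interpret prob_space M by fact
  have "complex_integrable M (\<lambda>x. iexp (t * X x))"
    by (rule integrable_const_bound[where B=1]) (auto intro!: AE_I2 simp: norm_exp_i_times)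
  hence "(LINT x|M. Re (iexp (- (t * \<mu>)) * iexp (t * X x)))
      = Re (iexp (- (t * \<mu>)) * (CLINT x|M. iexp (t * X x)))"
    by (subst integral_Re) auto
  also have "(CLINT x|M. iexp (t * X x)) = char (distr M borel X) t"
    unfolding char_def by (subst integral_distr) auto
  also have "Re (iexp (- (t * \<mu>)) * char (distr M borel X) t) = N t / D t"
  proof -
    define z where "z = 1 + complex_of_real (a t) * (1 - \<i> * complex_of_real \<theta>)"
    have "char (distr M borel X) t = inverse z" unfolding char z_def a_def using \<open>0 < t\<close> by simp
    moreover have "Re z = A t" "Im z = - B t" unfolding z_def A_def B_def by simp_all
    moreover have "(Re z)\<^sup>2 + (Im z)\<^sup>2 = D t" unfolding \<open>Re z = A t\<close> \<open>Im z = - B t\<close> D_def by simp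
    moreover have "Re (iexp (- (t * \<mu>))) = cos (\<mu> * t)" "Im (iexp (- (t * \<mu>))) = - sin (\<mu> * t)"
      by (simp_all add: Re_exp Im_exp mult.commute)
    ultimately show ?thesis
      by (simp add: N_def add_divide_distrib mult.commute)
  qed
  finally show ?thesis
    by (simp add: exp_diff[symmetric] Re_exp algebra_simps flip: exp_add)
qed

lemma abs_moment_eq_H_integral:
  fixes M :: "'b measure" and X :: "'b \<Rightarrow> real"
  assumes "prob_space M" and [measurable]: "X \<in> borel_measurable M"
    and char: "\<And>t. 0 < t \<Longrightarrow> char (distr M borel X) t
               = inverse (1 + complex_of_real (s * \<bar>t\<bar> powr \<alpha>) * (1 - \<i> * complex_of_real (\<theta> * sgn t)))"
  shows "integrable M (\<lambda>x. \<bar>X x - \<mu>\<bar> powr p)"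
    and "(LINT x|M. \<bar>X x - \<mu>\<bar> powr p)
           = lam / (sin (lam * pi / 2) * Gamma (1 - lam)) * (LBINT t:{0<..}. H t)"
proof -
  have integrand_eq: "(1 - (LINT x|M. cos (t * (X x - \<mu>)))) * t powr (- p - 1) = G t" if "0 < t" for t
    using expectation_cos_shift[OF assms(1,2) char[OF that] that] by (simp add: G_def g_def)
  have int: "set_integrable lborel {0<..} (\<lambda>t. (1 - (LINT x|M. cos (t * (X x - \<mu>)))) * t powr (- p - 1))"
    using set_integrable_integrands(1) by (subst set_integrable_cong) (auto simp: integrand_eq)
  have meas: "(\<lambda>x. X x - \<mu>) \<in> borel_measurable M" by measurable
  have "0 < p" using p_gt_1 by simp
  note moment = abs_powr_moment_cos_integral[OF assms(1) meas \<open>0 < p\<close> p_lt_2 int]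
  show "integrable M (\<lambda>x. \<bar>X x - \<mu>\<bar> powr p)"
    by (rule moment(1))
  have "(LBINT t:{0<..}. (1 - (LINT x|M. cos (t * (X x - \<mu>)))) * t powr (- p - 1)) = (LBINT t:{0<..}. G t)"
    by (rule set_lebesgue_integral_cong) (auto simp: integrand_eq)
  hence "(LINT x|M. \<bar>X x - \<mu>\<bar> powr p) = 2 * sin (pi * p / 2) * Gamma (p + 1) / pi * (LBINT t:{0<..}. G t)"
    using moment(2) by simp
  also have "\<dots> = 2 * sin (pi * p / 2) * Gamma (p + 1) / pi / p * (LBINT t:{0<..}. H t)"
    by (simp add: G_integral_by_parts)
  also have "2 * sin (pi * p / 2) * Gamma (p + 1) / pi / p = lam / (sin (lam * pi / 2) * Gamma (1 - lam))"
    unfolding p_def using lam_pos lam_lt alpha_lt_2 by (intro fractional_moment_constant) auto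
  finally show "(LINT x|M. \<bar>X x - \<mu>\<bar> powr p)
           = lam / (sin (lam * pi / 2) * Gamma (1 - lam)) * (LBINT t:{0<..}. H t)" .
qed

lemma abs_moment_formula:
  fixes M :: "'b measure" and X :: "'b \<Rightarrow> real"
  assumes "prob_space M" "X \<in> borel_measurable M"
    and "\<And>t. 0 < t \<Longrightarrow> char (distr M borel X) t
               = inverse (1 + complex_of_real (s * \<bar>t\<bar> powr \<alpha>) * (1 - \<i> * complex_of_real (\<theta> * sgn t)))"
  shows "integrable M (\<lambda>x. \<bar>X x - \<mu>\<bar> powr (1 + lam)) \<and>
    (LINT x|M. \<bar>X x - \<mu>\<bar> powr (1 + lam)) =
      lam / (sin (lam * pi / 2) * Gamma (1 - lam)) *
      (\<mu> * (LBINT u=0..\<infinity>. u powr (-(1 + lam)) *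
              (((1 + s * u powr \<alpha>) * sin (\<mu> * u) - \<theta> * s * u powr \<alpha> * cos (\<mu> * u))
               / ((1 + s * u powr \<alpha>)\<^sup>2 + (\<theta> * s * u powr \<alpha>)\<^sup>2)))
       - \<alpha> * s * (LBINT u=0..\<infinity>. u powr (\<alpha> - lam - 2) *
              ((cos (\<mu> * u) + \<theta> * sin (\<mu> * u)) / ((1 + s * u powr \<alpha>)\<^sup>2 + (\<theta> * s * u powr \<alpha>)\<^sup>2)))
       + 2 * \<alpha> * s * (LBINT u=0..\<infinity>. u powr (\<alpha> - lam - 2) *
              (((1 + s * u powr \<alpha>) * cos (\<mu> * u) + \<theta> * s * u powr \<alpha> * sin (\<mu> * u))
               * (1 + s * u powr \<alpha> + \<theta>\<^sup>2 * s * u powr \<alpha>)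
               / ((1 + s * u powr \<alpha>)\<^sup>2 + (\<theta> * s * u powr \<alpha>)\<^sup>2)\<^sup>2)))"
proof -
  have "(LBINT t:{0<..}. H t)
      = \<mu> * (LBINT t:{0<..}. T1 t) - \<alpha> * s * (LBINT t:{0<..}. T2 t) + 2 * \<alpha> * s * (LBINT t:{0<..}. T3 t)"
    unfolding H_def using set_integrable_integrands
    by (simp add: set_integral_add set_integral_diff set_integrable_mult_right)
  moreover have "T1 = (\<lambda>u. u powr (-(1 + lam)) *
              (((1 + s * u powr \<alpha>) * sin (\<mu> * u) - \<theta> * s * u powr \<alpha> * cos (\<mu> * u))
               / ((1 + s * u powr \<alpha>)\<^sup>2 + (\<theta> * s * u powr \<alpha>)\<^sup>2)))"
    "T2 = (\<lambda>u. u powr (\<alpha> - lam - 2) *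
              ((cos (\<mu> * u) + \<theta> * sin (\<mu> * u)) / ((1 + s * u powr \<alpha>)\<^sup>2 + (\<theta> * s * u powr \<alpha>)\<^sup>2)))"
    "T3 = (\<lambda>u. u powr (\<alpha> - lam - 2) *
              (((1 + s * u powr \<alpha>) * cos (\<mu> * u) + \<theta> * s * u powr \<alpha> * sin (\<mu> * u))
               * (1 + s * u powr \<alpha> + \<theta>\<^sup>2 * s * u powr \<alpha>)
               / ((1 + s * u powr \<alpha>)\<^sup>2 + (\<theta> * s * u powr \<alpha>)\<^sup>2)\<^sup>2))"
    by (simp_all add: fun_eq_iff T1_def T2_def T3_def N_def A_def B_def D_def a_def
                      mult.assoc power2_eq_square)
  ultimately show ?thesis
    using abs_moment_eq_H_integral[OF assms] unfolding p_def
    by (simp add: interval_lebesgue_integral_0_infty)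
qed

definition "R v = ((1 + v)\<^sup>2 + (\<theta> * v)\<^sup>2 + 2 * \<theta>\<^sup>2 * v) / ((1 + v)\<^sup>2 + (\<theta> * v)\<^sup>2)\<^sup>2"

lemma H_eq_if_mu_0:
  assumes "\<mu> = 0"
  shows "H t = \<alpha> * s * t powr (\<alpha> - lam - 2) * R (a t)"
proof -
  have "H t = \<alpha> * s * t powr (\<alpha> - lam - 2) * (2 * (A t * (A t + \<theta> * B t)) / (D t)\<^sup>2 - 1 / D t)"
    unfolding H_def T1_def T2_def T3_def N_def using assms by (simp add: algebra_simps)
  also have "2 * (A t * (A t + \<theta> * B t)) / (D t)\<^sup>2 - 1 / D t = R (a t)"
  proof -
    have "2 * (A t * (A t + \<theta> * B t)) - D t = (1 + a t)\<^sup>2 + (\<theta> * a t)\<^sup>2 + 2 * \<theta>\<^sup>2 * a t"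
      unfolding D_def A_def B_def by (simp add: power2_eq_square algebra_simps)
    hence "R (a t) = (2 * (A t * (A t + \<theta> * B t)) - D t) / (D t)\<^sup>2"
      unfolding R_def D_def A_def B_def by simp
    thus ?thesis using D_nonzero[of t] by (simp add: diff_divide_distrib power2_eq_square)
  qed
  finally show ?thesis .
qed

lemma H_integral_if_mu_0:
  assumes "\<mu> = 0" "0 < \<sigma>" "s = \<sigma> powr \<alpha>"
  shows "(LBINT t:{0<..}. H t) = \<sigma> powr p * (LBINT v:{0<..}. v powr (- p / \<alpha>) * R v)"
proof -
  define f where "f v = v powr (- p / \<alpha>) * R v" for v
  have subst: "s * \<alpha> * t powr (\<alpha> - 1) * f (s * t powr \<alpha>) = \<sigma> powr (- p) * H t" if "0 < t" for t
  proof -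
    have "(s * t powr \<alpha>) powr (- p / \<alpha>) = \<sigma> powr (- p) * t powr (- p)"
      using that s_pos alpha_gt_1 assms(2,3) by (simp add: powr_mult powr_powr)
    moreover have "t powr (\<alpha> - 1) * t powr (- p) = t powr (\<alpha> - lam - 2)"
      by (simp add: p_def flip: powr_add)
    ultimately show ?thesis
      unfolding f_def H_eq_if_mu_0[OF assms(1)] a_def by (simp add: algebra_simps)
  qed
  have int: "set_integrable lborel {0<..} (\<lambda>t. s * \<alpha> * t powr (\<alpha> - 1) * f (s * t powr \<alpha>))"
    using set_integrable_mult_right[OF set_integrable_integrands(5), of "\<sigma> powr (- p)"]
    by (subst set_integrable_cong) (auto simp: subst)
  hence "(\<lambda>t. s * \<alpha> * t powr (\<alpha> - 1) * f (s * t powr \<alpha>)) absolutely_integrable_on {0<..}"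
    unfolding set_integrable_def
    by (subst integrable_completion) (auto dest: borel_measurable_integrable)
  moreover have "integral {0<..} (\<lambda>t. s * \<alpha> * t powr (\<alpha> - 1) * f (s * t powr \<alpha>))
      = \<sigma> powr (- p) * (LBINT t:{0<..}. H t)"
  proof -
    have "integral {0<..} (\<lambda>t. s * \<alpha> * t powr (\<alpha> - 1) * f (s * t powr \<alpha>))
        = (LBINT t:{0<..}. s * \<alpha> * t powr (\<alpha> - 1) * f (s * t powr \<alpha>))"
      using set_borel_integral_eq_integral(2)[OF int] by simp
    also have "\<dots> = (LBINT t:{0<..}. \<sigma> powr (- p) * H t)"
      by (rule set_lebesgue_integral_cong) (auto simp: subst)
    also have "\<dots> = \<sigma> powr (- p) * (LBINT t:{0<..}. H t)"
      by (rule set_integral_mult_right)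
    finally show ?thesis .
  qed
  ultimately have "(\<lambda>t. s * \<alpha> * t powr (\<alpha> - 1) * f (s * t powr \<alpha>)) absolutely_integrable_on {0<..} \<and>
         integral {0<..} (\<lambda>t. s * \<alpha> * t powr (\<alpha> - 1) * f (s * t powr \<alpha>)) = \<sigma> powr (- p) * (LBINT t:{0<..}. H t)"
    by simp
  hence "f absolutely_integrable_on {0<..} \<and> integral {0<..} f = \<sigma> powr (- p) * (LBINT t:{0<..}. H t)"
    using s_pos alpha_gt_1 by (subst (asm) absolutely_integrable_powr_substitution) auto
  moreover have "continuous_on {0<..} f"
  proof -
    have "\<forall>v\<in>{0<..}. ((1 + v)\<^sup>2 + (\<theta> * v)\<^sup>2)\<^sup>2 \<noteq> 0"
      by (auto simp: add_pos_nonneg)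
    thus ?thesis unfolding f_def[abs_def] R_def by (intro continuous_intros) auto
  qed
  ultimately have "(LBINT v:{0<..}. f v) = \<sigma> powr (- p) * (LBINT t:{0<..}. H t)"
    using set_borel_integral_eq_integral(2)[OF set_integrable_lborel_if_absolutely_integrable] by simp
  thus ?thesis
    using assms(2) by (simp add: f_def powr_minus field_simps)
qed

end

theorem lemma2p3:
  fixes M :: "'a measure" and X :: "'a \<Rightarrow> real"
    and \<alpha> \<beta> \<sigma> lam :: real
  assumes "prob_space M"
    and "X \<in> borel_measurable M"
    and "1 < \<alpha>" "\<alpha> < 2" "\<bar>\<beta>\<bar> \<le> 1" "0 < \<sigma>"
    and charX: "\<And>t. char (distr M borel X) t =
        inverse (1 + complex_of_real (\<sigma> powr \<alpha> * \<bar>t\<bar> powr \<alpha>)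
                    * (1 - \<i> * complex_of_real (\<beta> * tan (pi * \<alpha> / 2) * sgn t)))"
    and "0 < lam" "lam < \<alpha> - 1"
  shows "let \<theta> = \<beta> * tan (pi * \<alpha> / 2);
             s = \<sigma> powr \<alpha>;
             D = (\<lambda>u. (1 + s * u powr \<alpha>)\<^sup>2 + (\<theta> * s * u powr \<alpha>)\<^sup>2);
             C = lam / (sin (lam * pi / 2) * Gamma (1 - lam))
         in (\<forall>\<mu>::real.
               integrable M (\<lambda>x. \<bar>X x - \<mu>\<bar> powr (1 + lam)) \<and>
               (LINT x|M. \<bar>X x - \<mu>\<bar> powr (1 + lam)) =
                 C * ( \<mu> * (LBINT u=0..\<infinity>. u powr (-(1 + lam)) *
                          (((1 + s * u powr \<alpha>) * sin (\<mu> * u) - \<theta> * s * u powr \<alpha> * cos (\<mu> * u)) / D u))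
                     - \<alpha> * s * (LBINT u=0..\<infinity>. u powr (\<alpha> - lam - 2) *
                          ((cos (\<mu> * u) + \<theta> * sin (\<mu> * u)) / D u))
                     + 2 * \<alpha> * s * (LBINT u=0..\<infinity>. u powr (\<alpha> - lam - 2) *
                          (((1 + s * u powr \<alpha>) * cos (\<mu> * u) + \<theta> * s * u powr \<alpha> * sin (\<mu> * u))
                           * (1 + s * u powr \<alpha> + \<theta>\<^sup>2 * s * u powr \<alpha>) / (D u)\<^sup>2))))
            \<and> integrable M (\<lambda>x. \<bar>X x\<bar> powr (1 + lam))
            \<and> (LINT x|M. \<bar>X x\<bar> powr (1 + lam)) =
                C * \<sigma> powr (1 + lam) * (LBINT v=0..\<infinity>. v powr (-(1 + lam) / \<alpha>) *
                  (((1 + v)\<^sup>2 + (\<theta> * v)\<^sup>2 + 2 * \<theta>\<^sup>2 * v) / ((1 + v)\<^sup>2 + (\<theta> * v)\<^sup>2)\<^sup>2))"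
proof -
  define \<theta> where "\<theta> = \<beta> * tan (pi * \<alpha> / 2)"
  define s where "s = \<sigma> powr \<alpha>"
  have gs: "geometric_stable \<alpha> s lam"
    using assms(3,4,6,8,9) by unfold_locales (auto simp: s_def)
  have char: "char (distr M borel X) t
      = inverse (1 + complex_of_real (s * \<bar>t\<bar> powr \<alpha>) * (1 - \<i> * complex_of_real (\<theta> * sgn t)))"
    if "0 < t" for t
    unfolding s_def \<theta>_def using charX by simp
  interpret G0: geometric_stable \<alpha> \<theta> s 0 lam by (rule gs)
  have "(LINT x|M. \<bar>X x\<bar> powr (1 + lam))
      = lam / (sin (lam * pi / 2) * Gamma (1 - lam)) * (LBINT t:{0<..}. G0.H t)"
    using G0.abs_moment_eq_H_integral(2)[OF assms(1,2) char] by (simp add: G0.p_def)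
  also have "\<dots> = lam / (sin (lam * pi / 2) * Gamma (1 - lam)) * \<sigma> powr (1 + lam)
      * (LBINT v=0..\<infinity>. v powr (-(1 + lam) / \<alpha>) * G0.R v)"
    using G0.H_integral_if_mu_0[OF refl assms(6) s_def]
    by (simp add: G0.p_def interval_lebesgue_integral_0_infty)
  finally show ?thesis
    unfolding Let_def \<theta>_def[symmetric] s_def[symmetric] G0.R_def
    using geometric_stable.abs_moment_formula[OF gs assms(1,2) char]
          geometric_stable.abs_moment_formula[OF gs assms(1,2) char, of 0]
    by simp
qed

end
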